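(* For all formulas $\varphi_1,\psi_1,\psi_2$ and every formula with placeholders $\varphi_2$: $\varphi_1\,\mathbf{W}\,\varphi_2[\psi_1\mathbf{U}\psi_2] \equiv (\varphi_1\,\mathbf{U}\,\varphi_2[\psi_1\mathbf{U}\psi_2]) \vee \mathbf{G}\varphi_1$. Moreover, for every formula with placeholders $\varphi_1$ and all formulas $\varphi_2,\psi_1,\psi_2$: $\varphi_1[\psi_1\mathbf{U}\psi_2]\,\mathbf{W}\,\varphi_2 \equiv (\mathbf{GF}\psi_2 \wedge \varphi_1[\psi_1\mathbf{W}\psi_2]\,\mathbf{W}\,\varphi_2) \vee \varphi_1[\psi_1\mathbf{U}\psi_2]\,\mathbf{U}\,(\varphi_2 \vee \mathbf{G}\varphi_1[\mathbf{false}])$.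
   Context: Fix a finite set $Ap$ of atomic propositions. A word is an infinite sequence $w = w[0]w[1]\dots$ of letters of $2^{Ap}$, and $w_i$ denotes the suffix $w[i]w[i+1]\dots$. Formulas are generated by $\varphi ::= \mathbf{true} \mid \mathbf{false} \mid a \mid \neg a \mid \varphi\wedge\varphi \mid \varphi\vee\varphi \mid \mathbf{X}\varphi \mid \varphi\,\mathbf{U}\,\varphi \mid \varphi\,\mathbf{W}\,\varphi \mid \mathbf{GF}\varphi \mid \mathbf{FG}\varphi$ ($a\in Ap$), where $\mathbf{GF}$, $\mathbf{FG}$ are single unary operators. Semantics: $w\models a$ iff $a\in w[0]$, $w\models\neg a$ iff $a\notin w[0]$, Boolean constants and connectives as usual; $w\models\mathbf{X}\varphi$ iff $w_1\models\varphi$; $w\models\varphi\mathbf{U}\psi$ iff $\exists k$: $w_k\models\psi$ and $\forall j<k$: $w_j\models\varphi$; $w\models\varphi\mathbf{W}\psi$ iff ($\forall k$: $w_k\models\varphi$) or $w\models\varphi\mathbf{U}\psi$; $w\models\mathbf{GF}\varphi$ iff $w_k\models\varphi$ for infinitely many $k$; $w\models\mathbf{FG}\varphi$ iff $\exists n\,\forall k\geq n$: $w_k\models\varphi$. $\mathbf{G}\varphi$ abbreviates $\varphi\,\mathbf{W}\,\mathbf{false}$ (so $w\models\mathbf{G}\varphi$ iff $w_k\models\varphi$ for all $k$). $\varphi\equiv\psi$ means both formulas are satisfied by exactly the same words. A formula with placeholders is a formula over $Ap\cup\{\star\}$, where $\star$ is a special fresh atomic proposition, with at least one occurrence of $\star$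 and no occurrence of $\neg\star$; for such $\varphi$ and a formula $\psi$, $\varphi[\psi]$ denotes the result of substituting $\psi$ for every occurrence of $\star$. Substitution binds more strongly than any operator, e.g. $\varphi_1\,\mathbf{W}\,\varphi_2[\psi]$ means $\varphi_1\,\mathbf{W}\,(\varphi_2[\psi])$. *)

theory Defs
  imports Main
begin

text \<open>LTL formulas in negation normal form over atomic propositions of type 'a
  (the finite set Ap is modelled by a finite type 'a).\<close>
datatype 'a ltl =
    LTrue
  | LFalse
  | Prop 'a
  | NProp 'a
  | And "'a ltl" "'a ltl"
  | Or "'a ltl" "'a ltl"
  | Next "'a ltl"
  | Until "'a ltl" "'a ltl"
  | WUntil "'a ltl" "'a ltl"
  | GF "'a ltl"
  | FG "'a ltl"

type_synonym 'a word = "nat \<Rightarrow> 'a set"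

definition suffix :: "nat \<Rightarrow> 'a word \<Rightarrow> 'a word" where
  "suffix i w = (\<lambda>j. w (i + j))"

fun sem :: "'a word \<Rightarrow> 'a ltl \<Rightarrow> bool" where
  "sem w LTrue = True"
| "sem w LFalse = False"
| "sem w (Prop a) = (a \<in> w 0)"
| "sem w (NProp a) = (a \<notin> w 0)"
| "sem w (And \<phi> \<psi>) = (sem w \<phi> \<and> sem w \<psi>)"
| "sem w (Or \<phi> \<psi>) = (sem w \<phi> \<or> sem w \<psi>)"
| "sem w (Next \<phi>) = sem (suffix 1 w) \<phi>"
| "sem w (Until \<phi> \<psi>) = (\<exists>k. sem (suffix k w) \<psi> \<and> (\<forall>j<k. sem (suffix j w) \<phi>))"
| "sem w (WUntil \<phi> \<psi>) = ((\<forall>k. sem (suffix k w) \<phi>) \<or>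
      (\<exists>k. sem (suffix k w) \<psi> \<and> (\<forall>j<k. sem (suffix j w) \<phi>)))"
| "sem w (GF \<phi>) = infinite {k. sem (suffix k w) \<phi>}"
| "sem w (FG \<phi>) = (\<exists>n. \<forall>k\<ge>n. sem (suffix k w) \<phi>)"

definition G :: "'a ltl \<Rightarrow> 'a ltl" where
  "G \<phi> = WUntil \<phi> LFalse"

definition ltl_equiv :: "'a ltl \<Rightarrow> 'a ltl \<Rightarrow> bool" where
  "ltl_equiv \<phi> \<psi> \<longleftrightarrow> (\<forall>w. sem w \<phi> = sem w \<psi>)"

text \<open>Formulas with placeholders: formulas over Ap \<union> {star}, modelled as 'a option,
  with None playing the role of the fresh proposition star.\<close>
fun star_occurs :: "'a option ltl \<Rightarrow> bool" where
  "star_occurs (Prop None) = True"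
| "star_occurs (And \<phi> \<psi>) = (star_occurs \<phi> \<or> star_occurs \<psi>)"
| "star_occurs (Or \<phi> \<psi>) = (star_occurs \<phi> \<or> star_occurs \<psi>)"
| "star_occurs (Next \<phi>) = star_occurs \<phi>"
| "star_occurs (Until \<phi> \<psi>) = (star_occurs \<phi> \<or> star_occurs \<psi>)"
| "star_occurs (WUntil \<phi> \<psi>) = (star_occurs \<phi> \<or> star_occurs \<psi>)"
| "star_occurs (GF \<phi>) = star_occurs \<phi>"
| "star_occurs (FG \<phi>) = star_occurs \<phi>"
| "star_occurs _ = False"

fun neg_star_occurs :: "'a option ltl \<Rightarrow> bool" where
  "neg_star_occurs (NProp None) = True"
| "neg_star_occurs (And \<phi> \<psi>) = (neg_star_occurs \<phi> \<or> neg_star_occurs \<psi>)"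
| "neg_star_occurs (Or \<phi> \<psi>) = (neg_star_occurs \<phi> \<or> neg_star_occurs \<psi>)"
| "neg_star_occurs (Next \<phi>) = neg_star_occurs \<phi>"
| "neg_star_occurs (Until \<phi> \<psi>) = (neg_star_occurs \<phi> \<or> neg_star_occurs \<psi>)"
| "neg_star_occurs (WUntil \<phi> \<psi>) = (neg_star_occurs \<phi> \<or> neg_star_occurs \<psi>)"
| "neg_star_occurs (GF \<phi>) = neg_star_occurs \<phi>"
| "neg_star_occurs (FG \<phi>) = neg_star_occurs \<phi>"
| "neg_star_occurs _ = False"

definition placeholder_formula :: "'a option ltl \<Rightarrow> bool" where
  "placeholder_formula \<phi> \<longleftrightarrow> star_occurs \<phi> \<and> \<not> neg_star_occurs \<phi>"

text \<open>Substitution phi[psi] of psi for every occurrence of star.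
  (The NProp None case never arises for placeholder formulas.)\<close>
fun subst :: "'a option ltl \<Rightarrow> 'a ltl \<Rightarrow> 'a ltl" where
  "subst LTrue \<psi> = LTrue"
| "subst LFalse \<psi> = LFalse"
| "subst (Prop None) \<psi> = \<psi>"
| "subst (Prop (Some a)) \<psi> = Prop a"
| "subst (NProp None) \<psi> = LFalse"
| "subst (NProp (Some a)) \<psi> = NProp a"
| "subst (And \<phi>1 \<phi>2) \<psi> = And (subst \<phi>1 \<psi>) (subst \<phi>2 \<psi>)"
| "subst (Or \<phi>1 \<phi>2) \<psi> = Or (subst \<phi>1 \<psi>) (subst \<phi>2 \<psi>)"
| "subst (Next \<phi>) \<psi> = Next (subst \<phi> \<psi>)"
| "subst (Until \<phi>1 \<phi>2) \<psi> = Until (subst \<phi>1 \<psi>) (subst \<phi>2 \<psi>)"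
| "subst (WUntil \<phi>1 \<phi>2) \<psi> = WUntil (subst \<phi>1 \<psi>) (subst \<phi>2 \<psi>)"
| "subst (GF \<phi>) \<psi> = GF (subst \<phi> \<psi>)"
| "subst (FG \<phi>) \<psi> = FG (subst \<phi> \<psi>)"

end

theory Submission
  imports Defs
begin

text \<open>The first equivalence is the unfolding of weak until. For the second, write \<open>\<chi>\<close> for
  \<open>\<phi>\<^sub>1\<close> and split on \<open>GF \<psi>\<^sub>2\<close>. If \<open>\<psi>\<^sub>2\<close> holds infinitely often, \<open>\<psi>\<^sub>1 U \<psi>\<^sub>2\<close> and
  \<open>\<psi>\<^sub>1 W \<psi>\<^sub>2\<close> agree on every suffix, hence so do \<open>\<chi>[\<psi>\<^sub>1 U \<psi>\<^sub>2]\<close> and \<open>\<chi>[\<psi>\<^sub>1 W \<psi>\<^sub>2]\<close>.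
  Otherwise \<open>\<psi>\<^sub>1 U \<psi>\<^sub>2\<close> is eventually always false, so \<open>\<chi>[\<psi>\<^sub>1 U \<psi>\<^sub>2]\<close> eventually agrees
  with \<open>\<chi>[false]\<close>, and \<open>G \<chi>[\<psi>\<^sub>1 U \<psi>\<^sub>2]\<close> yields \<open>\<chi>[\<psi>\<^sub>1 U \<psi>\<^sub>2] U G \<chi>[false]\<close>. In both
  cases the disjunct \<open>\<chi>[\<psi>\<^sub>1 U \<psi>\<^sub>2] U (\<phi>\<^sub>2 \<or> G \<chi>[false])\<close> implies the left-hand side,
  because \<open>\<chi>[false]\<close> implies \<open>\<chi>[\<psi>\<^sub>1 U \<psi>\<^sub>2]\<close>: \<open>\<chi>\<close> is positive in the placeholder.\<close>

lemma suffix_suffix [simp]: "suffix i (suffix j w) = suffix (j + i) w"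
  by (simp add: suffix_def add.assoc)

lemma suffix_0 [simp]: "suffix 0 w = w"
  by (simp add: suffix_def)

lemma sem_G: "sem w (G \<phi>) \<longleftrightarrow> (\<forall>k. sem (suffix k w) \<phi>)"
  by (simp add: G_def)

lemma WUntil_equiv_Until_or_G: "ltl_equiv (WUntil \<phi> \<psi>) (Or (Until \<phi> \<psi>) (G \<phi>))"
  by (auto simp: ltl_equiv_def sem_G)

lemma sem_GF_iff_unbounded: "sem w (GF \<phi>) \<longleftrightarrow> (\<forall>m. \<exists>k\<ge>m. sem (suffix k w) \<phi>)"
  by (simp add: frequently_cofinite [symmetric] cofinite_eq_sequentially frequently_sequentially)

lemma sem_GF_suffix: "sem (suffix i w) (GF \<phi>) \<longleftrightarrow> sem w (GF \<phi>)"
  unfolding sem_GF_iff_unbounded suffix_suffix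
proof
  assume "\<forall>m. \<exists>k\<ge>m. sem (suffix (i + k) w) \<phi>"
  then show "\<forall>m. \<exists>k\<ge>m. sem (suffix k w) \<phi>"
    by (meson le_add2 order_trans)
next
  assume unbounded: "\<forall>m. \<exists>k\<ge>m. sem (suffix k w) \<phi>"
  show "\<forall>m. \<exists>k\<ge>m. sem (suffix (i + k) w) \<phi>"
  proof
    fix m
    obtain k where "k \<ge> i + m" "sem (suffix k w) \<phi>"
      using unbounded by blast
    then show "\<exists>k\<ge>m. sem (suffix (i + k) w) \<phi>"
      by (intro exI [of _ "k - i"]) auto
  qed
qed

lemma GF_imp_Until_iff_WUntil:
  assumes "sem w (GF \<psi>2)"
  shows "sem w (Until \<psi>1 \<psi>2) \<longleftrightarrow> sem w (WUntil \<psi>1 \<psi>2)"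
proof -
  obtain k where "sem (suffix k w) \<psi>2"
    using assms unfolding sem_GF_iff_unbounded by blast
  then show ?thesis by auto
qed

lemma not_GF_imp_eventually_not_Until:
  assumes "\<not> sem w (GF \<psi>2)"
  shows "\<exists>n. \<forall>k\<ge>n. \<not> sem (suffix k w) (Until \<psi>1 \<psi>2)"
proof -
  obtain n where "\<forall>k\<ge>n. \<not> sem (suffix k w) \<psi>2"
    using assms unfolding sem_GF_iff_unbounded by (meson nle_le)
  then show ?thesis by (intro exI [of _ n]) auto
qed

lemma sem_subst_mono:
  assumes "\<not> neg_star_occurs \<phi>"
    and "\<forall>i. sem (suffix i w) \<psi> \<longrightarrow> sem (suffix i w) \<psi>'"
    and "sem (suffix k w) (subst \<phi> \<psi>)"
  shows "sem (suffix k w) (subst \<phi> \<psi>')"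
  using assms(1,3)
proof (induction \<phi> arbitrary: k)
  case (Prop x)
  then show ?case using assms(2) by (cases x) auto
next
  case (NProp x)
  then show ?case by (cases x) auto
next
  case (GF \<phi>)
  then have "{j. sem (suffix (k + j) w) (subst \<phi> \<psi>)} \<subseteq> {j. sem (suffix (k + j) w) (subst \<phi> \<psi>')}"
    by auto
  with GF show ?case by (auto intro: finite_subset)
qed (simp; blast)+

lemma sem_subst_cong:
  assumes "\<forall>i\<ge>k. sem (suffix i w) \<psi> \<longleftrightarrow> sem (suffix i w) \<psi>'"
  shows "sem (suffix k w) (subst \<phi> \<psi>) \<longleftrightarrow> sem (suffix k w) (subst \<phi> \<psi>')"
  using assms by (induction \<phi> \<psi> arbitrary: k rule: subst.induct) simp_all

lemma GF_imp_sem_subst_Until_iff_WUntil: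
  assumes "sem w (GF \<psi>2)"
  shows "sem (suffix k w) (subst \<phi> (Until \<psi>1 \<psi>2)) \<longleftrightarrow>
    sem (suffix k w) (subst \<phi> (WUntil \<psi>1 \<psi>2))"
proof (rule sem_subst_cong, intro allI impI)
  fix i
  have "sem (suffix i w) (GF \<psi>2)"
    using assms sem_GF_suffix by blast
  then show "sem (suffix i w) (Until \<psi>1 \<psi>2) \<longleftrightarrow> sem (suffix i w) (WUntil \<psi>1 \<psi>2)"
    by (rule GF_imp_Until_iff_WUntil)
qed

lemma not_GF_imp_eventually_sem_subst_Until_iff_LFalse:
  assumes "\<not> sem w (GF \<psi>2)"
  shows "\<exists>n. \<forall>k\<ge>n.
    sem (suffix k w) (subst \<phi> (Until \<psi>1 \<psi>2)) \<longleftrightarrow> sem (suffix k w) (subst \<phi> LFalse)"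
proof -
  obtain n where n: "\<forall>k\<ge>n. \<not> sem (suffix k w) (Until \<psi>1 \<psi>2)"
    using not_GF_imp_eventually_not_Until [OF assms] by blast
  have "sem (suffix k w) (subst \<phi> (Until \<psi>1 \<psi>2)) \<longleftrightarrow> sem (suffix k w) (subst \<phi> LFalse)"
    if "k \<ge> n" for k
    using n that by (intro sem_subst_cong) simp
  then show ?thesis by blast
qed

lemma Until_Or_G_imp_WUntil:
  assumes "\<forall>k. sem (suffix k w) \<chi> \<longrightarrow> sem (suffix k w) \<phi>"
    and "sem w (Until \<phi> (Or \<psi> (G \<chi>)))"
  shows "sem w (WUntil \<phi> \<psi>)"
proof -
  obtain k where k: "sem (suffix k w) \<psi> \<or> (\<forall>i. sem (suffix (k + i) w) \<chi>)"
    and before: "\<forall>j<k. sem (suffix j w) \<phi>"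
    using assms(2) by (auto simp: sem_G)
  show ?thesis
  proof (cases "sem (suffix k w) \<psi>")
    case True
    with before show ?thesis by auto
  next
    case False
    then have "sem (suffix j w) \<phi>" if "j \<ge> k" for j
      using k assms(1) that by (metis le_add_diff_inverse)
    with before have "\<forall>j. sem (suffix j w) \<phi>"
      by (meson not_less)
    then show ?thesis by simp
  qed
qed

lemma WUntil_subst_Until_equiv:
  assumes "\<not> neg_star_occurs \<phi>"
  shows "ltl_equiv (WUntil (subst \<phi> (Until \<psi>1 \<psi>2)) \<phi>2)
           (Or (And (GF \<psi>2) (WUntil (subst \<phi> (WUntil \<psi>1 \<psi>2)) \<phi>2))
               (Until (subst \<phi> (Until \<psi>1 \<psi>2)) (Or \<phi>2 (G (subst \<phi> LFalse)))))"
  unfolding ltl_equiv_def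
proof
  fix w :: "'a word"
  let ?A = "subst \<phi> (Until \<psi>1 \<psi>2)" and ?B = "subst \<phi> (WUntil \<psi>1 \<psi>2)"
    and ?C = "subst \<phi> LFalse"
  have C_imp_A: "\<forall>k. sem (suffix k w) ?C \<longrightarrow> sem (suffix k w) ?A"
  proof (intro allI impI)
    fix k
    assume "sem (suffix k w) ?C"
    then show "sem (suffix k w) ?A"
      by (rule sem_subst_mono [OF assms, rotated]) simp
  qed
  show "sem w (WUntil ?A \<phi>2) \<longleftrightarrow>
    sem w (Or (And (GF \<psi>2) (WUntil ?B \<phi>2)) (Until ?A (Or \<phi>2 (G ?C))))"
  proof (cases "sem w (GF \<psi>2)")
    case True
    then have "sem (suffix k w) ?A \<longleftrightarrow> sem (suffix k w) ?B" for k
      by (rule GF_imp_sem_subst_Until_iff_WUntil)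
    then have "sem w (WUntil ?A \<phi>2) \<longleftrightarrow> sem w (WUntil ?B \<phi>2)"
      by simp
    with True Until_Or_G_imp_WUntil [OF C_imp_A] show ?thesis
      by auto
  next
    case False
    obtain n where n: "\<forall>k\<ge>n. sem (suffix k w) ?A \<longleftrightarrow> sem (suffix k w) ?C"
      using not_GF_imp_eventually_sem_subst_Until_iff_LFalse [OF False] by blast
    have "sem w (Until ?A (Or \<phi>2 (G ?C)))" if "sem w (WUntil ?A \<phi>2)"
    proof (cases "\<forall>k. sem (suffix k w) ?A")
      case True
      then have "sem (suffix n w) (G ?C)"
        using n by (simp add: sem_G)
      with True show ?thesis by auto
    qed (use that in auto)
    with False Until_Or_G_imp_WUntil [OF C_imp_A] show ?thesis
      by auto
  qed
qed

theorem lemma1: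
  shows "(\<forall>(\<phi>1 :: 'a::finite ltl) (\<phi>2 :: 'a option ltl) \<psi>1 \<psi>2.
            placeholder_formula \<phi>2 \<longrightarrow>
            ltl_equiv (WUntil \<phi>1 (subst \<phi>2 (Until \<psi>1 \<psi>2)))
                      (Or (Until \<phi>1 (subst \<phi>2 (Until \<psi>1 \<psi>2))) (G \<phi>1)))
       \<and> (\<forall>(\<phi>1 :: 'a option ltl) (\<phi>2 :: 'a ltl) \<psi>1 \<psi>2.
            placeholder_formula \<phi>1 \<longrightarrow>
            ltl_equiv (WUntil (subst \<phi>1 (Until \<psi>1 \<psi>2)) \<phi>2)
                      (Or (And (GF \<psi>2) (WUntil (subst \<phi>1 (WUntil \<psi>1 \<psi>2)) \<phi>2))
                          (Until (subst \<phi>1 (Until \<psi>1 \<psi>2))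
                                 (Or \<phi>2 (G (subst \<phi>1 LFalse))))))"
  by (simp add: WUntil_equiv_Until_or_G WUntil_subst_Until_equiv placeholder_formula_def)

end
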